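(* Let $m,n$ be natural numbers with $m\geqslant3$, and let $c_1,C_1$ be positive constants. Let $(\psi_1,\dots,\psi_m)=\Psi:\mathbb{R}^n\to\mathbb{R}^m$ be a system of homogeneous linear forms whose coefficients are bounded in absolute value by $C_1$, and suppose $\Psi$ has $c_1$-Cauchy–Schwarz complexity $s$ for some finite $s$. Then for each $i\in[m]$ there is an extension $\Psi':\mathbb{R}^{n'}\to\mathbb{R}^m$ of $\Psi$ such that: (1) $n'=n+s+1\leqslant n+m-1$; (2) $\Psi'(\mathbf u,w_1,\dots,w_{s+1})=\Psi(\mathbf u+w_1\mathbf f_1+\dots+w_{s+1}\mathbf f_{s+1})$ for some vectors $\mathbf f_k\in\mathbb{R}^n$ with $\Vert\mathbf f_k\Vert_\infty=O_{c_1,C_1}(1)$ for every $k$; (3) $\Psi'$ is in normal form with respect to $\psi'_i$; (4) $\psi'_i(\mathbf0,\mathbf w)=w_1+\dots+w_{s+1}$.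
   Context: A linear map $\Psi:\mathbb{R}^n\to\mathbb{R}^m$ is viewed as a system of homogeneous linear forms $(\psi_1,\dots,\psi_m)$ (its coordinate functions) and identified with its $m\times n$ matrix; $\operatorname{dist}$ is $\ell^\infty$ distance between matrices (entries as coordinates). Normal form: $\Psi$ is in normal form with respect to $\psi_i$ if there is an integer $t\geqslant0$ and a set $J_i$ of $t+1$ standard basis vectors of $\mathbb{R}^n$ such that $\prod_{\mathbf e\in J_i}\psi_{i'}(\mathbf e)$ is non-zero for $i'=i$ and zero for every $i'\neq i$. Extension: $\Psi'=(\psi'_1,\dots,\psi'_m):\mathbb{R}^{n'}\to\mathbb{R}^m$ with $n'\geqslant n$ is an extension of $\Psi$ if $\Psi'(\mathbb{R}^{n'})=\Psi(\mathbb{R}^n)$ and $\Psi$ is the restriction of $\Psi'$ to $\mathbb{R}^n\times\{0\}^{n'-n}$. Suitable partitions: for $i\in[m]$, a partition $\mathcal P_i$ of $[m]\setminus\{i\}$ into disjoint parts $\mathcal C_1,\dots,\mathcal C_{t+1}$ is suitable for $\Psi$ if $\psi_i\notin\mathrm{span}_{\mathbb{R}}(\psi_j:j\in\mathcal C_k)$ for every $k$; $V_{\mathcal P_i}$ denotes the set of all systems $\Psi:\mathbb{R}^n\to\mathbb{R}^m$ for which $\mathcal P_i$ is not suitable. $c_1$-Cauchy–Schwarz complexity: for each $i$, $s_i+1$ is the minimal number of parts of a partition $\mathcal P_i$ of $[m]\setminus\{i\}$ with $\operatorname{dist}(\Psi,V_{\mathcal P_i})\geqslant c_1$ ($s_i=\infty$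 if none exists), and $s=\max(1,\max_is_i)$. $O_{c_1,C_1}(1)$ denotes a bound depending only on $c_1,C_1,m,n$. *)

theory Defs
  imports Complex_Main "HOL-Library.Disjoint_Sets"
begin

(* A system Psi : R^N -> R^M of linear forms is represented by its M x N matrix
   as a function  Psi :: nat => nat => real ; row i (i < M) is the form psi_i,
   its coefficients are  Psi i j  for  j < N.  Entries outside the range are irrelevant.
   Indices are 0-based: [m] = {0..<m}. *)

definition form_apply :: "(nat \<Rightarrow> nat \<Rightarrow> real) \<Rightarrow> nat \<Rightarrow> nat \<Rightarrow> (nat \<Rightarrow> real) \<Rightarrow> real" where
  "form_apply Psi N i x = (\<Sum>j<N. Psi i j * x j)"

definition sys_image :: "(nat \<Rightarrow> nat \<Rightarrow> real) \<Rightarrow> nat \<Rightarrow> nat \<Rightarrow> (nat \<Rightarrow> real) set" where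
  "sys_image Psi M N = {(\<lambda>i. if i < M then form_apply Psi N i x else 0) | x. True}"

definition mat_dist :: "nat \<Rightarrow> nat \<Rightarrow> (nat \<Rightarrow> nat \<Rightarrow> real) \<Rightarrow> (nat \<Rightarrow> nat \<Rightarrow> real) \<Rightarrow> real" where
  "mat_dist M N A B = Max (insert 0 {\<bar>A i j - B i j\<bar> | i j. i < M \<and> j < N})"

definition in_span_forms :: "(nat \<Rightarrow> nat \<Rightarrow> real) \<Rightarrow> nat \<Rightarrow> nat set \<Rightarrow> nat \<Rightarrow> bool" where
  "in_span_forms Psi N C i \<longleftrightarrow> (\<exists>a::nat \<Rightarrow> real. \<forall>k<N. Psi i k = (\<Sum>j\<in>C. a j * Psi j k))"

definition suitable :: "(nat \<Rightarrow> nat \<Rightarrow> real) \<Rightarrow> nat \<Rightarrow> nat \<Rightarrow> nat set set \<Rightarrow> bool" where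
  "suitable Psi N i P \<longleftrightarrow> (\<forall>C\<in>P. \<not> in_span_forms Psi N C i)"

(* dist(Psi, V_P) >= c1, where V_P = systems R^N -> R^M for which P is not suitable
   (the infimum over V_P is >= c1 iff every member has distance >= c1) *)
definition far_from_V :: "nat \<Rightarrow> nat \<Rightarrow> real \<Rightarrow> (nat \<Rightarrow> nat \<Rightarrow> real) \<Rightarrow> nat \<Rightarrow> nat set set \<Rightarrow> bool" where
  "far_from_V M N c1 Psi i P \<longleftrightarrow>
     (\<forall>Phi. \<not> suitable Phi N i P \<longrightarrow> mat_dist M N Psi Phi \<ge> c1)"

definition good_partition :: "nat \<Rightarrow> nat \<Rightarrow> real \<Rightarrow> (nat \<Rightarrow> nat \<Rightarrow> real) \<Rightarrow> nat \<Rightarrow> nat set set \<Rightarrow> bool" where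
  "good_partition M N c1 Psi i P \<longleftrightarrow> partition_on ({..<M} - {i}) P \<and> far_from_V M N c1 Psi i P"

definition cs_index :: "nat \<Rightarrow> nat \<Rightarrow> real \<Rightarrow> (nat \<Rightarrow> nat \<Rightarrow> real) \<Rightarrow> nat \<Rightarrow> nat" where
  "cs_index M N c1 Psi i = (LEAST t. \<exists>P. good_partition M N c1 Psi i P \<and> card P = t + 1)"

definition has_cs_complexity :: "nat \<Rightarrow> nat \<Rightarrow> real \<Rightarrow> (nat \<Rightarrow> nat \<Rightarrow> real) \<Rightarrow> nat \<Rightarrow> bool" where
  "has_cs_complexity M N c1 Psi s \<longleftrightarrow>
     (\<forall>i<M. \<exists>P. good_partition M N c1 Psi i P) \<and>
     s = max 1 (Max ((\<lambda>i. cs_index M N c1 Psi i) ` {..<M}))"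

definition is_extension :: "nat \<Rightarrow> nat \<Rightarrow> nat \<Rightarrow> (nat \<Rightarrow> nat \<Rightarrow> real) \<Rightarrow> (nat \<Rightarrow> nat \<Rightarrow> real) \<Rightarrow> bool" where
  "is_extension M N N' Psi' Psi \<longleftrightarrow> N' \<ge> N \<and> sys_image Psi' M N' = sys_image Psi M N \<and>
     (\<forall>i<M. \<forall>j<N. Psi' i j = Psi i j)"

definition normal_form_wrt :: "nat \<Rightarrow> nat \<Rightarrow> (nat \<Rightarrow> nat \<Rightarrow> real) \<Rightarrow> nat \<Rightarrow> bool" where
  "normal_form_wrt M N Psi i \<longleftrightarrow>
     (\<exists>(t::nat) J. J \<subseteq> {..<N} \<and> card J = t + 1 \<and>
        (\<Prod>j\<in>J. Psi i j) \<noteq> 0 \<and> (\<forall>i'<M. i' \<noteq> i \<longrightarrow> (\<Prod>j\<in>J. Psi i' j) = 0))"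

end

theory Submission
  imports Defs
begin

text \<open>For a part \<open>C\<close> of a good partition, project \<open>\<psi>\<^sub>i\<close> orthogonally onto the span of the
forms \<open>\<psi>\<^sub>j\<close>, \<open>j \<in> C\<close>. Subtracting the residual \<open>g\<close> from \<open>\<psi>\<^sub>i\<close> yields a system for which
the partition is not suitable, so \<open>c\<^sub>1\<close>-farness forces some coordinate of \<open>g\<close> to have size
\<open>\<ge> c\<^sub>1\<close>; hence \<open>g / \<parallel>g\<parallel>\<^sup>2\<close> is a vector with \<open>\<psi>\<^sub>i = 1\<close>, \<open>\<psi>\<^sub>j = 0\<close> on \<open>C\<close> and sup norm
\<open>\<le> 1/c\<^sub>1\<close>. Choosing one such vector \<open>f\<^sub>k\<close> per part (repeating parts to get exactly \<open>s + 1\<close>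
vectors) and setting \<open>\<Psi>'(u, w) = \<Psi>(u + \<Sum>\<^sub>k w\<^sub>k f\<^sub>k)\<close> gives the extension: the new
coordinates are the standard basis vectors witnessing the normal form with respect to \<open>\<psi>'\<^sub>i\<close>,
since every \<open>\<psi>'\<^sub>j\<close>, \<open>j \<noteq> i\<close>, vanishes on the new coordinate of the part containing \<open>j\<close>.\<close>

definition inner_upto :: "nat \<Rightarrow> (nat \<Rightarrow> real) \<Rightarrow> (nat \<Rightarrow> real) \<Rightarrow> real" where
  "inner_upto n u v = (\<Sum>l<n. u l * v l)"

lemma inner_upto_self_eq_0D:
  assumes "inner_upto n h h = 0" "k < n"
  shows "h k = 0"
proof -
  have "\<forall>l\<in>{..<n}. h l * h l = 0"
    using assms(1) unfolding inner_upto_def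
    by (subst sum_nonneg_eq_0_iff[symmetric]) auto
  then show ?thesis using assms(2) by auto
qed

lemma inner_upto_lin_comb:
  assumes "\<forall>k<n. w k = h k + (\<Sum>j\<in>C. b j * r j k)"
  shows "inner_upto n u w = inner_upto n u h + (\<Sum>j\<in>C. b j * inner_upto n u (r j))"
proof -
  have "inner_upto n u w = (\<Sum>l<n. u l * h l + (\<Sum>j\<in>C. b j * (u l * r j l)))"
    unfolding inner_upto_def using assms
    by (intro sum.cong) (auto simp: sum_distrib_left algebra_simps)
  also have "\<dots> = inner_upto n u h + (\<Sum>j\<in>C. b j * inner_upto n u (r j))"
    unfolding inner_upto_def sum.distrib
    by (simp add: sum_distrib_left sum.swap[of _ C])
  finally show ?thesis .
qed

lemma exists_orthogonal_residual:
  assumes "finite C"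
  shows "\<exists>g a. (\<forall>k<n. x k - g k = (\<Sum>j\<in>C. a j * r j k)) \<and> (\<forall>j\<in>C. inner_upto n g (r j) = 0)"
  using assms
proof (induction C arbitrary: x rule: finite_induct)
  case empty
  show ?case by (rule exI[of _ x]) auto
next
  case (insert v C)
  obtain g1 a1 where g1: "\<forall>k<n. x k - g1 k = (\<Sum>j\<in>C. a1 j * r j k)"
      "\<forall>j\<in>C. inner_upto n g1 (r j) = 0"
    using insert.IH by blast
  obtain h b where h: "\<forall>k<n. r v k - h k = (\<Sum>j\<in>C. b j * r j k)"
      "\<forall>j\<in>C. inner_upto n h (r j) = 0"
    using insert.IH by blast
  \<comment> \<open>Gram--Schmidt step; if \<open>h = 0\<close> then \<open>c = 0\<close> since \<open>x / 0 = 0\<close>, which is harmless.\<close>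
  define c where "c = inner_upto n g1 h / inner_upto n h h"
  define g where "g = (\<lambda>l. g1 l - c * h l)"
  define a where "a = (\<lambda>j. if j = v then c else a1 j - c * b j)"
  have span: "\<forall>k<n. x k - g k = (\<Sum>j\<in>insert v C. a j * r j k)"
  proof (intro allI impI)
    fix k assume k: "k < n"
    have "(\<Sum>j\<in>insert v C. a j * r j k) = c * r v k + (\<Sum>j\<in>C. (a1 j - c * b j) * r j k)"
      using insert.hyps unfolding a_def by (auto intro!: sum.cong)
    also have "\<dots> = c * r v k + (\<Sum>j\<in>C. a1 j * r j k) - c * (\<Sum>j\<in>C. b j * r j k)"
      by (simp add: algebra_simps sum_subtractf sum_distrib_left)
    also have "\<dots> = x k - g k"
      using g1(1) h(1) k unfolding g_def by (simp add: algebra_simps)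
    finally show "x k - g k = (\<Sum>j\<in>insert v C. a j * r j k)" by simp
  qed
  have lin: "inner_upto n g w = inner_upto n g1 w - c * inner_upto n h w" for w
    unfolding inner_upto_def g_def by (simp add: algebra_simps sum_subtractf sum_distrib_left)
  have orth_C: "\<forall>j\<in>C. inner_upto n g (r j) = 0"
    using lin g1(2) h(2) by simp
  have orth_h: "inner_upto n g h = 0"
  proof (cases "inner_upto n h h = 0")
    case True
    then have "inner_upto n g1 h = 0"
      unfolding inner_upto_def using inner_upto_self_eq_0D[OF True] by simp
    then show ?thesis using lin True by simp
  next
    case False
    then show ?thesis using lin unfolding c_def by simp
  qed
  have "\<forall>k<n. r v k = h k + (\<Sum>j\<in>C. b j * r j k)"
    using h(1) by (simp add: algebra_simps)
  from inner_upto_lin_comb[OF this, of g] have "inner_upto n g (r v) = 0"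
    using orth_h orth_C by simp
  with orth_C span show ?case by blast
qed

lemma mat_dist_less:
  assumes "c > 0" "\<And>i j. i < M \<Longrightarrow> j < N \<Longrightarrow> \<bar>A i j - B i j\<bar> < c"
  shows "mat_dist M N A B < c"
proof -
  have "{\<bar>A i j - B i j\<bar> | i j. i < M \<and> j < N}
      = (\<lambda>(i, j). \<bar>A i j - B i j\<bar>) ` ({..<M} \<times> {..<N})"
    by auto
  then have "finite {\<bar>A i j - B i j\<bar> | i j. i < M \<and> j < N}" by simp
  then show ?thesis
    using assms unfolding mat_dist_def by (auto simp: Max_less_iff)
qed

lemma far_from_V_residual_large:
  assumes far: "far_from_V M N c1 Psi i P" and "C \<in> P" "i \<notin> C" "c1 > 0"
    and span: "\<forall>k<N. Psi i k - g k = (\<Sum>j\<in>C. a j * Psi j k)"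
  shows "\<exists>l<N. c1 \<le> \<bar>g l\<bar>"
proof (rule ccontr)
  assume "\<not> ?thesis"
  then have small: "\<forall>l<N. \<bar>g l\<bar> < c1" by auto
  define Phi where "Phi = Psi(i := (\<lambda>k. Psi i k - g k))"
  have "in_span_forms Phi N C i"
    unfolding in_span_forms_def
  proof (rule exI[of _ a], intro allI impI)
    fix k assume "k < N"
    then have "Phi i k = (\<Sum>j\<in>C. a j * Psi j k)" using span by (simp add: Phi_def)
    also have "\<dots> = (\<Sum>j\<in>C. a j * Phi j k)"
      using \<open>i \<notin> C\<close> by (intro sum.cong) (auto simp: Phi_def)
    finally show "Phi i k = (\<Sum>j\<in>C. a j * Phi j k)" .
  qed
  then have "\<not> suitable Phi N i P"
    using \<open>C \<in> P\<close> unfolding suitable_def by blast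
  then have "c1 \<le> mat_dist M N Psi Phi"
    using far unfolding far_from_V_def by blast
  moreover have "mat_dist M N Psi Phi < c1"
    using small \<open>c1 > 0\<close> by (intro mat_dist_less) (auto simp: Phi_def)
  ultimately show False by simp
qed

lemma dual_vector_exists:
  assumes far: "far_from_V M N c1 Psi i P" and "C \<in> P" "finite C" "i \<notin> C" "c1 > 0"
  shows "\<exists>f. form_apply Psi N i f = 1 \<and> (\<forall>j\<in>C. form_apply Psi N j f = 0)
             \<and> (\<forall>l<N. \<bar>f l\<bar> \<le> 1 / c1)"
proof -
  obtain g a where span: "\<forall>k<N. Psi i k - g k = (\<Sum>j\<in>C. a j * Psi j k)"
      and orth: "\<forall>j\<in>C. inner_upto N g (Psi j) = 0"
    using exists_orthogonal_residual[OF \<open>finite C\<close>] by blast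
  obtain l0 where l0: "l0 < N" "c1 \<le> \<bar>g l0\<bar>"
    using far_from_V_residual_large[OF assms(1,2,4,5) span] by blast
  define G where "G = inner_upto N g g"
  have sq_le_G: "g k * g k \<le> G" if "k < N" for k
    unfolding G_def inner_upto_def using that by (intro member_le_sum) auto
  have "c1 * c1 \<le> \<bar>g l0\<bar> * \<bar>g l0\<bar>"
    using l0 \<open>c1 > 0\<close> by (intro mult_mono) auto
  then have c1_sq_le_G: "c1 * c1 \<le> G"
    using sq_le_G[OF l0(1)] by (simp add: abs_mult_self_eq)
  then have "G > 0"
    using \<open>c1 > 0\<close> by (smt (verit) mult_pos_pos)
  have "\<forall>k<N. Psi i k = g k + (\<Sum>j\<in>C. a j * Psi j k)"
    using span by (simp add: algebra_simps)
  from inner_upto_lin_comb[OF this, of g] have "inner_upto N g (Psi i) = G"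
    using orth unfolding G_def by simp
  have "\<bar>g l\<bar> * c1 \<le> G" if "l < N" for l
  proof (cases "c1 \<le> \<bar>g l\<bar>")
    case True
    then have "\<bar>g l\<bar> * c1 \<le> \<bar>g l\<bar> * \<bar>g l\<bar>" by (intro mult_left_mono) auto
    then show ?thesis using sq_le_G[OF that] by (simp add: abs_mult_self_eq)
  next
    case False
    then have "\<bar>g l\<bar> * c1 \<le> c1 * c1" using \<open>c1 > 0\<close> by (intro mult_right_mono) auto
    then show ?thesis using c1_sq_le_G by linarith
  qed
  then have "\<forall>l<N. \<bar>g l / G\<bar> \<le> 1 / c1"
    using \<open>G > 0\<close> \<open>c1 > 0\<close> by (simp add: abs_div field_simps)
  moreover have "form_apply Psi N j (\<lambda>l. g l / G) = inner_upto N g (Psi j) / G" for j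
    unfolding form_apply_def inner_upto_def
    by (simp add: sum_divide_distrib[symmetric] mult.commute)
  ultimately show ?thesis
    using \<open>inner_upto N g (Psi i) = G\<close> \<open>G > 0\<close> orth by (intro exI[of _ "\<lambda>l. g l / G"]) auto
qed

lemma card_le_card_if_partition_on:
  assumes "partition_on A P" "finite A"
  shows "card P \<le> card A"
proof -
  have fin: "\<And>p. p \<in> P \<Longrightarrow> finite p"
    using assms partition_onD1 by (metis Union_upper finite_subset)
  have "card P = (\<Sum>p\<in>P. 1)" by simp
  also have "\<dots> \<le> (\<Sum>p\<in>P. card p)"
  proof (intro sum_mono)
    fix p assume "p \<in> P"
    then have "p \<noteq> {}" using assms(1) partition_onD3 by blast
    then show "1 \<le> card p" using fin[OF \<open>p \<in> P\<close>] by (simp add: Suc_leI card_gt_0_iff)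
  qed
  also have "\<dots> = card A" using product_partition[OF assms(1) fin] by simp
  finally show ?thesis .
qed

lemma good_partition_card_bounds:
  assumes "good_partition M N c1 Psi i P" "i < M" "2 \<le> M"
  shows "0 < card P" "card P \<le> M - 1"
proof -
  have pon: "partition_on ({..<M} - {i}) P"
    using assms(1) unfolding good_partition_def by simp
  have "card ({..<M} - {i}) = M - 1" using assms(2) by simp
  then show "card P \<le> M - 1"
    using card_le_card_if_partition_on[OF pon] by simp
  have "{..<M} - {i} \<noteq> {}"
    using \<open>card ({..<M} - {i}) = M - 1\<close> assms(3) by (intro notI) simp
  then have "P \<noteq> {}" using pon partition_onD1 by fastforce
  moreover have "finite P" using finite_elements[OF _ pon] by simp
  ultimately show "0 < card P" by (simp add: card_gt_0_iff)
qed

lemma cs_index_attained: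
  assumes "good_partition M N c1 Psi i P" "0 < card P"
  shows "\<exists>P'. good_partition M N c1 Psi i P' \<and> card P' = cs_index M N c1 Psi i + 1"
  unfolding cs_index_def
  by (rule LeastI_ex) (metis Suc_eq_plus1 assms gr0_implies_Suc)

lemma cs_index_less_card:
  assumes "good_partition M N c1 Psi i P" "0 < card P"
  shows "cs_index M N c1 Psi i < card P"
proof -
  obtain t where t: "card P = t + 1" using assms(2) by (metis Suc_eq_plus1 gr0_implies_Suc)
  have "cs_index M N c1 Psi i \<le> t"
    unfolding cs_index_def using assms(1) t by (intro Least_le) auto
  then show ?thesis using t by simp
qed

lemma has_cs_complexity_le:
  assumes "has_cs_complexity M N c1 Psi s" "3 \<le> M"
  shows "s \<le> M - 2"
proof -
  have "cs_index M N c1 Psi i \<le> M - 2" if "i < M" for i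
  proof -
    obtain P where "good_partition M N c1 Psi i P"
      using assms(1) \<open>i < M\<close> unfolding has_cs_complexity_def by blast
    with good_partition_card_bounds[OF this \<open>i < M\<close>] cs_index_less_card[OF this]
    show ?thesis using assms(2) by simp
  qed
  then have "Max ((\<lambda>i. cs_index M N c1 Psi i) ` {..<M}) \<le> M - 2"
    using assms(2) by (subst Max_le_iff) (auto simp: lessThan_empty_iff)
  then show ?thesis
    using assms unfolding has_cs_complexity_def by simp
qed

lemma has_cs_complexity_good_partition:
  assumes "has_cs_complexity M N c1 Psi s" "i < M" "2 \<le> M"
  obtains P where "good_partition M N c1 Psi i P" "card P \<le> s + 1"
proof -
  obtain P0 where P0: "good_partition M N c1 Psi i P0"
    using assms(1,2) unfolding has_cs_complexity_def by blast
  obtain P where P: "good_partition M N c1 Psi i P" "card P = cs_index M N c1 Psi i + 1"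
    using cs_index_attained[OF P0 good_partition_card_bounds(1)[OF P0 assms(2,3)]] by blast
  have "cs_index M N c1 Psi i \<le> Max ((\<lambda>i. cs_index M N c1 Psi i) ` {..<M})"
    using assms(2) by (intro Max_ge) auto
  then have "card P \<le> s + 1"
    using P(2) assms(1) unfolding has_cs_complexity_def by simp
  with P(1) show thesis by (rule that)
qed

lemma exists_surj_from_lessThan:
  assumes "finite P" "P \<noteq> {}" "card P \<le> t"
  shows "\<exists>e. e ` {..<t} = P"
proof -
  obtain h where h: "bij_betw h {0..<card P} P"
    using ex_bij_betw_nat_finite[OF assms(1)] by blast
  have "0 < card P" using assms(1,2) by (simp add: card_gt_0_iff)
  define e where "e = (\<lambda>k. h (if k < card P then k else 0))"
  have "e ` {..<t} = h ` {0..<card P}"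
    unfolding e_def using \<open>0 < card P\<close> assms(3) by (auto intro!: image_eqI)
  then show ?thesis using h by (auto simp: bij_betw_def)
qed

lemma dual_vectors_for_good_partition:
  assumes good: "good_partition M N c1 Psi i P" and "card P \<le> t" "i < M" "2 \<le> M" "c1 > 0"
  shows "\<exists>f. (\<forall>k<t. form_apply Psi N i (f k) = 1 \<and> (\<forall>l<N. \<bar>f k l\<bar> \<le> 1 / c1))
           \<and> (\<forall>i'<M. i' \<noteq> i \<longrightarrow> (\<exists>k<t. form_apply Psi N i' (f k) = 0))"
proof -
  have pon: "partition_on ({..<M} - {i}) P" and far: "far_from_V M N c1 Psi i P"
    using good unfolding good_partition_def by auto
  have "finite P" using finite_elements[OF _ pon] by simp
  moreover have "P \<noteq> {}" using good_partition_card_bounds(1)[OF good assms(3,4)] by auto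
  ultimately obtain e where e: "e ` {..<t} = P"
    using exists_surj_from_lessThan assms(2) by blast
  have "\<exists>f. form_apply Psi N i f = 1 \<and> (\<forall>j\<in>e k. form_apply Psi N j f = 0)
             \<and> (\<forall>l<N. \<bar>f l\<bar> \<le> 1 / c1)" if "k < t" for k
  proof -
    have "e k \<in> P" using e that by blast
    then have "e k \<subseteq> {..<M} - {i}" using pon partition_onD1 by blast
    then have "finite (e k)" "i \<notin> e k" by (auto intro: finite_subset)
    then show ?thesis using dual_vector_exists[OF far \<open>e k \<in> P\<close> _ _ \<open>c1 > 0\<close>] by blast
  qed
  then obtain f where f: "\<And>k. k < t \<Longrightarrow> form_apply Psi N i (f k) = 1
      \<and> (\<forall>j\<in>e k. form_apply Psi N j (f k) = 0) \<and> (\<forall>l<N. \<bar>f k l\<bar> \<le> 1 / c1)"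
    by metis
  have "\<exists>k<t. form_apply Psi N i' (f k) = 0" if "i' < M" "i' \<noteq> i" for i'
  proof -
    have "i' \<in> \<Union>P" using that partition_onD1[OF pon] by auto
    then obtain k where "k < t" "i' \<in> e k" using e by auto
    then show ?thesis using f by blast
  qed
  then show ?thesis using f by blast
qed

definition extend_sys ::
    "(nat \<Rightarrow> nat \<Rightarrow> real) \<Rightarrow> nat \<Rightarrow> (nat \<Rightarrow> nat \<Rightarrow> real) \<Rightarrow> nat \<Rightarrow> nat \<Rightarrow> real" where
  "extend_sys Psi N f i j = (if j < N then Psi i j else form_apply Psi N i (f (j - N)))"

lemma sum_lessThan_add_split:
  "(\<Sum>j<n + (t::nat). F j) = (\<Sum>j<n. F j) + (\<Sum>k<t. F (n + k))"
  by (induction t) (auto simp: add.assoc)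

lemma form_apply_add_lin_comb:
  "form_apply Psi N i (\<lambda>j. x j + (\<Sum>k<t. c k * f k j))
     = form_apply Psi N i x + (\<Sum>k<t. c k * form_apply Psi N i (f k))"
  unfolding form_apply_def
  by (simp add: algebra_simps sum.distrib sum_distrib_left sum.swap[of _ "{..<N}"])

lemma form_apply_extend_sys:
  "form_apply (extend_sys Psi N f) (N + t) i x
     = form_apply Psi N i (\<lambda>j. x j + (\<Sum>k<t. x (N + k) * f k j))"
proof -
  have "form_apply (extend_sys Psi N f) (N + t) i x
      = form_apply Psi N i x + (\<Sum>k<t. x (N + k) * form_apply Psi N i (f k))"
    unfolding form_apply_def[of "extend_sys Psi N f"] sum_lessThan_add_split
    by (simp add: extend_sys_def mult.commute form_apply_def[of Psi])
  then show ?thesis by (simp only: form_apply_add_lin_comb)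
qed

lemma is_extension_extend_sys:
  "is_extension M N (N + t) (extend_sys Psi N f) Psi"
  unfolding is_extension_def
proof (intro conjI allI impI)
  show "sys_image (extend_sys Psi N f) M (N + t) = sys_image Psi M N"
  proof
    show "sys_image (extend_sys Psi N f) M (N + t) \<subseteq> sys_image Psi M N"
    proof
      fix y assume "y \<in> sys_image (extend_sys Psi N f) M (N + t)"
      then obtain x where "y = (\<lambda>i. if i < M then form_apply (extend_sys Psi N f) (N + t) i x else 0)"
        unfolding sys_image_def by blast
      then show "y \<in> sys_image Psi M N"
        unfolding sys_image_def form_apply_extend_sys
        by (intro CollectI exI[of _ "\<lambda>j. x j + (\<Sum>k<t. x (N + k) * f k j)"]) simp
    qed
  next
    show "sys_image Psi M N \<subseteq> sys_image (extend_sys Psi N f) M (N + t)"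
    proof
      fix y assume "y \<in> sys_image Psi M N"
      then obtain x where y: "y = (\<lambda>i. if i < M then form_apply Psi N i x else 0)"
        unfolding sys_image_def by blast
      define x' where "x' = (\<lambda>j. if j < N then x j else 0)"
      have x': "form_apply (extend_sys Psi N f) (N + t) i x' = form_apply Psi N i x" for i
        unfolding form_apply_extend_sys by (simp add: x'_def form_apply_def)
      then have "y = (\<lambda>i. if i < M then form_apply (extend_sys Psi N f) (N + t) i x' else 0)"
        unfolding y by (intro ext) (simp only: x')
      then show "y \<in> sys_image (extend_sys Psi N f) M (N + t)"
        unfolding sys_image_def by blast
    qed
  qed
qed (auto simp: extend_sys_def)

lemma normal_form_wrt_extend_sys:
  assumes "0 < t" "\<forall>k<t. form_apply Psi N i (f k) \<noteq> 0"
    and "\<forall>i'<M. i' \<noteq> i \<longrightarrow> (\<exists>k<t. form_apply Psi N i' (f k) = 0)"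
  shows "normal_form_wrt M (N + t) (extend_sys Psi N f) i"
  unfolding normal_form_wrt_def
proof (intro exI[of _ "t - 1"] exI[of _ "{N..<N + t}"] conjI allI impI)
  show "(\<Prod>j\<in>{N..<N + t}. extend_sys Psi N f i j) \<noteq> 0"
    using assms(2) by (auto simp: extend_sys_def)
next
  fix i' assume "i' < M" "i' \<noteq> i"
  then obtain k where "k < t" "form_apply Psi N i' (f k) = 0" using assms(3) by blast
  then show "(\<Prod>j\<in>{N..<N + t}. extend_sys Psi N f i' j) = 0"
    by (intro prod_zero bexI[of _ "N + k"]) (auto simp: extend_sys_def)
qed (use assms(1) in auto)

lemma form_apply_extend_sys_new_coords:
  assumes "\<forall>k<t. form_apply Psi N i (f k) = 1"
  shows "form_apply (extend_sys Psi N f) (N + t) i (\<lambda>j. if j < N then 0 else w (j - N))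
     = (\<Sum>k<t. w k)"
  unfolding form_apply_extend_sys form_apply_add_lin_comb
  using assms by (simp add: form_apply_def)

theorem proposition6p7:
  fixes m n :: nat and c1 C1 :: real
  assumes "m \<ge> 3" and "c1 > 0" and "C1 > 0"
  shows "\<exists>B::real. \<forall>(Psi :: nat \<Rightarrow> nat \<Rightarrow> real) (s::nat).
     (\<forall>i<m. \<forall>j<n. \<bar>Psi i j\<bar> \<le> C1) \<and> has_cs_complexity m n c1 Psi s \<longrightarrow>
     (\<forall>i<m. \<exists>(Psi' :: nat \<Rightarrow> nat \<Rightarrow> real) (f :: nat \<Rightarrow> nat \<Rightarrow> real).
        is_extension m n (n + s + 1) Psi' Psi \<and>
        n + s + 1 \<le> n + m - 1 \<and>
        (\<forall>k<s+1. \<forall>j<n. \<bar>f k j\<bar> \<le> B) \<and>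
        (\<forall>i'<m. \<forall>x. form_apply Psi' (n + s + 1) i' x =
             form_apply Psi n i' (\<lambda>j. x j + (\<Sum>k<s+1. x (n + k) * f k j))) \<and>
        normal_form_wrt m (n + s + 1) Psi' i \<and>
        (\<forall>w. form_apply Psi' (n + s + 1) i (\<lambda>j. if j < n then 0 else w (j - n)) = (\<Sum>k<s+1. w k)))"
proof (rule exI[of _ "1 / c1"], intro allI impI)
  fix Psi :: "nat \<Rightarrow> nat \<Rightarrow> real" and s i :: nat
  assume "(\<forall>i<m. \<forall>j<n. \<bar>Psi i j\<bar> \<le> C1) \<and> has_cs_complexity m n c1 Psi s" and "i < m"
  \<comment> \<open>The coefficient bound \<open>C1\<close> is not needed: the bound \<open>1 / c1\<close> comes from farness alone.\<close>
  then have cs: "has_cs_complexity m n c1 Psi s" by blast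
  have "2 \<le> m" using \<open>m \<ge> 3\<close> by simp
  obtain P where P: "good_partition m n c1 Psi i P" "card P \<le> s + 1"
    using has_cs_complexity_good_partition[OF cs \<open>i < m\<close> \<open>2 \<le> m\<close>] .
  obtain f where
    f: "\<forall>k<s + 1. form_apply Psi n i (f k) = 1 \<and> (\<forall>l<n. \<bar>f k l\<bar> \<le> 1 / c1)" and
    covers: "\<forall>i'<m. i' \<noteq> i \<longrightarrow> (\<exists>k<s + 1. form_apply Psi n i' (f k) = 0)"
    using dual_vectors_for_good_partition[OF P \<open>i < m\<close> \<open>2 \<le> m\<close> \<open>c1 > 0\<close>] by blast
  let ?Psi' = "extend_sys Psi n f"
  have N: "n + s + 1 = n + (s + 1)" by simp
  have ext: "is_extension m n (n + s + 1) ?Psi' Psi"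
    unfolding N by (rule is_extension_extend_sys)
  have eq: "\<forall>i'<m. \<forall>x. form_apply ?Psi' (n + s + 1) i' x =
      form_apply Psi n i' (\<lambda>j. x j + (\<Sum>k<s + 1. x (n + k) * f k j))"
    unfolding N using form_apply_extend_sys by blast
  have nf: "normal_form_wrt m (n + s + 1) ?Psi' i"
    unfolding N using f covers by (intro normal_form_wrt_extend_sys) auto
  have new: "\<forall>w. form_apply ?Psi' (n + s + 1) i (\<lambda>j. if j < n then 0 else w (j - n))
      = (\<Sum>k<s + 1. w k)"
    unfolding N using f by (intro allI form_apply_extend_sys_new_coords) blast
  have "n + s + 1 \<le> n + m - 1"
    using has_cs_complexity_le[OF cs \<open>m \<ge> 3\<close>] \<open>m \<ge> 3\<close> by simp
  with ext eq nf new f show "\<exists>Psi' f. is_extension m n (n + s + 1) Psi' Psi \<and> n + s + 1 \<le> n + m - 1 \<and>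
        (\<forall>k<s + 1. \<forall>j<n. \<bar>f k j\<bar> \<le> 1 / c1) \<and>
        (\<forall>i'<m. \<forall>x. form_apply Psi' (n + s + 1) i' x =
             form_apply Psi n i' (\<lambda>j. x j + (\<Sum>k<s + 1. x (n + k) * f k j))) \<and>
        normal_form_wrt m (n + s + 1) Psi' i \<and>
        (\<forall>w. form_apply Psi' (n + s + 1) i (\<lambda>j. if j < n then 0 else w (j - n)) = (\<Sum>k<s + 1. w k))"
    by blast
qed

end
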